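(* For every integer $k\ge3$, there are infinitely many pairwise non-isomorphic connected $k$-regular highly-regular graphs which are not distance-regular.
   Context: A graph $\Gamma$ of order $n$ is highly-regular with collapsed adjacency matrix $C=[c_{i,j}]_{1\le i,j\le m}$, where $2\le m<n$ (the value $m=n$ allowed only when $n=2$), if for every vertex $u$ there is a partition of $V(\Gamma)$ into nonempty sets $V_1(u)=\{u\},\dots,V_m(u)$ such that every $y\in V_j(u)$ is adjacent to exactly $c_{i,j}$ vertices of $V_i(u)$. A connected graph is distance-regular if for all $u,v$ the numbers $|D_1(v)\cap D_{i-1}(u)|$, $|D_1(v)\cap D_i(u)|$, $|D_1(v)\cap D_{i+1}(u)|$ depend only on $i=d(u,v)$, where $D_i(u)=\{v:d(u,v)=i\}$. *)

theory Defs
  imports Main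
begin

type_synonym graph = "nat set \<times> (nat \<Rightarrow> nat \<Rightarrow> bool)"

definition simple_graph :: "graph \<Rightarrow> bool" where
  "simple_graph G \<longleftrightarrow> (case G of (V, E) \<Rightarrow>
     finite V \<and> V \<noteq> {} \<and>
     (\<forall>x y. E x y \<longrightarrow> x \<in> V \<and> y \<in> V) \<and>
     (\<forall>x y. E x y \<longrightarrow> E y x) \<and> (\<forall>x. \<not> E x x))"

definition nbhd :: "graph \<Rightarrow> nat \<Rightarrow> nat set" where
  "nbhd G v = {u \<in> fst G. snd G v u}"

definition k_regular :: "nat \<Rightarrow> graph \<Rightarrow> bool" where
  "k_regular k G \<longleftrightarrow> (\<forall>v \<in> fst G. card (nbhd G v) = k)"

definition graph_connected :: "graph \<Rightarrow> bool" where
  "graph_connected G \<longleftrightarrow> (\<forall>u \<in> fst G. \<forall>v \<in> fst G. (snd G)\<^sup>*\<^sup>* u v)"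

definition gdist :: "graph \<Rightarrow> nat \<Rightarrow> nat \<Rightarrow> nat" where
  "gdist G u v = (LEAST n. (snd G ^^ n) u v)"

definition Dset :: "graph \<Rightarrow> nat \<Rightarrow> nat \<Rightarrow> nat set" where
  "Dset G i u = {v \<in> fst G. gdist G u v = i}"

text \<open>D_{-1}(u) is empty; we index the three counts explicitly.\<close>
definition Dprev :: "graph \<Rightarrow> nat \<Rightarrow> nat \<Rightarrow> nat set" where
  "Dprev G i u = (if i = 0 then {} else Dset G (i - 1) u)"

definition distance_regular :: "graph \<Rightarrow> bool" where
  "distance_regular G \<longleftrightarrow> graph_connected G \<and>
     (\<forall>u \<in> fst G. \<forall>v \<in> fst G. \<forall>w \<in> fst G. \<forall>x \<in> fst G.
        gdist G u v = gdist G w x \<longrightarrow>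
          (let i = gdist G u v in
           card (nbhd G v \<inter> Dprev G i u) = card (nbhd G x \<inter> Dprev G i w) \<and>
           card (nbhd G v \<inter> Dset G i u) = card (nbhd G x \<inter> Dset G i w) \<and>
           card (nbhd G v \<inter> Dset G (i + 1) u) = card (nbhd G x \<inter> Dset G (i + 1) w)))"

text \<open>Highly-regular with collapsed adjacency matrix C (indices 1..m):
  for every vertex u there is a partition V_1(u)={u}, ..., V_m(u) of V into nonempty
  sets such that each y in V_j(u) has exactly C i j neighbours in V_i(u).\<close>
definition highly_regular_with :: "graph \<Rightarrow> nat \<Rightarrow> (nat \<Rightarrow> nat \<Rightarrow> nat) \<Rightarrow> bool" where
  "highly_regular_with G m C \<longleftrightarrow>
     2 \<le> m \<and> (m < card (fst G) \<or> (m = card (fst G) \<and> card (fst G) = 2)) \<and>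
     (\<forall>u \<in> fst G. \<exists>P :: nat \<Rightarrow> nat set.
        P 1 = {u} \<and>
        (\<forall>i \<in> {1..m}. P i \<noteq> {}) \<and>
        (\<forall>i \<in> {1..m}. \<forall>j \<in> {1..m}. i \<noteq> j \<longrightarrow> P i \<inter> P j = {}) \<and>
        (\<Union>i \<in> {1..m}. P i) = fst G \<and>
        (\<forall>i \<in> {1..m}. \<forall>j \<in> {1..m}. \<forall>y \<in> P j. card (nbhd G y \<inter> P i) = C i j))"

definition highly_regular :: "graph \<Rightarrow> bool" where
  "highly_regular G \<longleftrightarrow> (\<exists>m C. highly_regular_with G m C)"

definition graph_iso :: "graph \<Rightarrow> graph \<Rightarrow> bool" where
  "graph_iso G H \<longleftrightarrow> (\<exists>f. bij_betw f (fst G) (fst H) \<and>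
     (\<forall>x \<in> fst G. \<forall>y \<in> fst G. snd G x y \<longleftrightarrow> snd H (f x) (f y)))"

end

theory Submission
  imports Defs "HOL-Number_Theory.Cong"
begin

text \<open>The witnesses are the Cartesian products of a cycle C_N, N \<ge> 5, with the complete graph
  K_(k-1). They are connected and k-regular, and distinct N give distinct orders. Rotations of the
  cycle and permutations of the layers act transitively on the vertices, and the automorphisms fixing
  a vertex (reflections of the cycle, permutations of the other layers) act transitively on each set
  of vertices at a given cyclic distance from it that lie in its own layer or in another one. These
  sets therefore form an equitable partition around every vertex, which is high regularity. The graph
  is not distance-regular: a vertex two steps away along the cycle has one common neighbour with the
  base vertex, but a vertex reached by one cycle step and one layer change has two.\<close>

section \<open>Automorphisms and equitable partitions\<close>

definition graph_aut :: "graph \<Rightarrow> (nat \<Rightarrow> nat) \<Rightarrow> bool" where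
  "graph_aut G h \<longleftrightarrow> bij_betw h (fst G) (fst G) \<and>
     (\<forall>x\<in>fst G. \<forall>y\<in>fst G. snd G x y \<longleftrightarrow> snd G (h x) (h y))"

lemma graph_aut_image_nbhd:
  assumes h: "graph_aut G h" and y: "y \<in> fst G"
  shows "h ` nbhd G y = nbhd G (h y)"
proof
  have bij: "bij_betw h (fst G) (fst G)"
    and adj: "\<And>x z. x \<in> fst G \<Longrightarrow> z \<in> fst G \<Longrightarrow> snd G x z \<longleftrightarrow> snd G (h x) (h z)"
    using h by (auto simp: graph_aut_def)
  show "h ` nbhd G y \<subseteq> nbhd G (h y)"
    using adj y bij by (auto simp: nbhd_def bij_betw_def)
  show "nbhd G (h y) \<subseteq> h ` nbhd G y"
  proof
    fix w assume w: "w \<in> nbhd G (h y)"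
    then have "w \<in> h ` fst G" using bij by (simp add: nbhd_def bij_betw_def)
    then obtain z where "z \<in> fst G" "w = h z" by blast
    then show "w \<in> h ` nbhd G y" using adj y w by (auto simp: nbhd_def)
  qed
qed

lemma graph_aut_card_nbhd_Int:
  assumes h: "graph_aut G h" and y: "y \<in> fst G" and A: "A \<subseteq> fst G"
  shows "card (nbhd G (h y) \<inter> h ` A) = card (nbhd G y \<inter> A)"
proof -
  have inj: "inj_on h (fst G)" using h by (auto simp: graph_aut_def bij_betw_def)
  have nbhd_sub: "nbhd G y \<subseteq> fst G" by (auto simp: nbhd_def)
  have "nbhd G (h y) \<inter> h ` A = h ` (nbhd G y \<inter> A)"
    using graph_aut_image_nbhd[OF h y] inj_on_image_Int[OF inj nbhd_sub A] by simp
  moreover have "inj_on h (nbhd G y \<inter> A)" using inj nbhd_sub by (blast intro: inj_on_subset)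
  ultimately show ?thesis by (simp add: card_image)
qed

lemma graph_aut_image_eq:
  assumes h: "graph_aut G h" and A: "A \<subseteq> fst G" and stable: "\<forall>v\<in>fst G. h v \<in> A \<longleftrightarrow> v \<in> A"
  shows "h ` A = A"
proof
  show "h ` A \<subseteq> A" using A stable by auto
  show "A \<subseteq> h ` A"
  proof
    fix w assume w: "w \<in> A"
    then have "w \<in> h ` fst G" using h A by (auto simp: graph_aut_def bij_betw_def)
    then obtain z where "z \<in> fst G" "w = h z" by blast
    then show "w \<in> h ` A" using stable w by auto
  qed
qed

lemma graph_aut_card_nbhd_Int_stable:
  assumes h: "graph_aut G h" and y: "y \<in> fst G" and A: "A \<subseteq> fst G"
    and stable: "\<forall>v\<in>fst G. h v \<in> A \<longleftrightarrow> v \<in> A"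
  shows "card (nbhd G (h y) \<inter> A) = card (nbhd G y \<inter> A)"
  using graph_aut_card_nbhd_Int[OF h y A] graph_aut_image_eq[OF h A stable] by simp

text \<open>The cells of a partition on which the automorphisms preserving every cell act transitively
  form an equitable partition; vertex transitivity then moves it to every base vertex.\<close>
lemma highly_regular_if_cellwise_transitive:
  assumes m: "2 \<le> m" "m < card (fst G)"
    and u0: "u0 \<in> fst G" "P 1 = {u0}"
    and nonempty: "\<forall>i\<in>{1..m}. P i \<noteq> {}"
    and disjoint: "\<forall>i\<in>{1..m}. \<forall>j\<in>{1..m}. i \<noteq> j \<longrightarrow> P i \<inter> P j = {}"
    and cover: "(\<Union>i\<in>{1..m}. P i) = fst G"
    and cell_transitive: "\<forall>j\<in>{1..m}. \<forall>y\<in>P j. \<forall>y'\<in>P j. \<exists>h. graph_aut G h \<and>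
               (\<forall>i\<in>{1..m}. \<forall>v\<in>fst G. h v \<in> P i \<longleftrightarrow> v \<in> P i) \<and> h y = y'"
    and vertex_transitive: "\<forall>u\<in>fst G. \<exists>\<sigma>. graph_aut G \<sigma> \<and> \<sigma> u0 = u"
  shows "highly_regular G"
proof -
  have P_sub: "P i \<subseteq> fst G" if "i \<in> {1..m}" for i using cover that by blast
  have equitable: "card (nbhd G y \<inter> P i) = card (nbhd G y' \<inter> P i)"
    if i: "i \<in> {1..m}" and j: "j \<in> {1..m}" and y: "y \<in> P j" "y' \<in> P j" for i j y y'
  proof -
    obtain h where h: "graph_aut G h" "\<forall>i\<in>{1..m}. \<forall>v\<in>fst G. h v \<in> P i \<longleftrightarrow> v \<in> P i" "h y = y'"
      using cell_transitive j y by blast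
    then show ?thesis
      using graph_aut_card_nbhd_Int_stable[OF h(1) _ P_sub[OF i]] P_sub[OF j] y i by auto
  qed
  define C where "C i j = card (nbhd G (SOME y. y \<in> P j) \<inter> P i)" for i j
  have C: "card (nbhd G y \<inter> P i) = C i j" if "i \<in> {1..m}" "j \<in> {1..m}" "y \<in> P j" for i j y
    unfolding C_def using equitable[OF that(1,2) that(3) someI[of "\<lambda>y. y \<in> P j", OF that(3)]] .
  have "highly_regular_with G m C"
    unfolding highly_regular_with_def
  proof (intro conjI ballI)
    show "2 \<le> m" "m < card (fst G) \<or> m = card (fst G) \<and> card (fst G) = 2" using m by simp_all
  next
    fix u assume "u \<in> fst G"
    then obtain \<sigma> where \<sigma>: "graph_aut G \<sigma>" "\<sigma> u0 = u" using vertex_transitive by blast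
    have bij: "bij_betw \<sigma> (fst G) (fst G)" using \<sigma>(1) by (simp add: graph_aut_def)
    then have inj: "inj_on \<sigma> (fst G)" by (simp add: bij_betw_def)
    show "\<exists>Q. Q 1 = {u} \<and> (\<forall>i\<in>{1..m}. Q i \<noteq> {}) \<and>
        (\<forall>i\<in>{1..m}. \<forall>j\<in>{1..m}. i \<noteq> j \<longrightarrow> Q i \<inter> Q j = {}) \<and>
        \<Union> (Q ` {1..m}) = fst G \<and>
        (\<forall>i\<in>{1..m}. \<forall>j\<in>{1..m}. \<forall>y\<in>Q j. card (nbhd G y \<inter> Q i) = C i j)"
    proof (intro exI[of _ "\<lambda>i. \<sigma> ` P i"] conjI ballI impI)
      show "\<sigma> ` P 1 = {u}" using u0 \<sigma> by simp
      show "\<Union> ((\<lambda>i. \<sigma> ` P i) ` {1..m}) = fst G"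
        using cover bij by (simp add: bij_betw_def flip: image_UN)
    next
      fix i assume "i \<in> {1..m}" then show "\<sigma> ` P i \<noteq> {}" using nonempty by auto
    next
      fix i j assume ij: "i \<in> {1..m}" "j \<in> {1..m}" "i \<noteq> j"
      have "\<sigma> ` P i \<inter> \<sigma> ` P j = \<sigma> ` (P i \<inter> P j)"
        using inj_on_image_Int[OF inj P_sub[OF ij(1)] P_sub[OF ij(2)]] by simp
      then show "\<sigma> ` P i \<inter> \<sigma> ` P j = {}" using disjoint ij by simp
    next
      fix i j y assume i: "i \<in> {1..m}" and j: "j \<in> {1..m}" and "y \<in> \<sigma> ` P j"
      then obtain y0 where y0: "y0 \<in> P j" "y = \<sigma> y0" by auto
      then show "card (nbhd G y \<inter> \<sigma> ` P i) = C i j"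
        using graph_aut_card_nbhd_Int[OF \<sigma>(1) _ P_sub[OF i]] P_sub[OF j] C[OF i j y0(1)] by auto
    qed
  qed
  then show ?thesis unfolding highly_regular_def by blast
qed

lemma graph_iso_card_eq: "graph_iso G H \<Longrightarrow> card (fst G) = card (fst H)"
  unfolding graph_iso_def by (blast intro: bij_betw_same_card)

section \<open>Distance two\<close>

lemma gdist_eq_1:
  assumes G: "simple_graph G" and adj: "snd G u z"
  shows "gdist G u z = 1"
  unfolding gdist_def
proof (rule Least_equality)
  show "(snd G ^^ 1) u z" using adj by (simp only: relpowp_1)
  have "u \<noteq> z" using G adj by (cases G) (auto simp: simple_graph_def)
  then show "1 \<le> n" if "(snd G ^^ n) u z" for n using that by (cases n) auto
qed

lemma adjacent_if_gdist_eq_1: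
  assumes conn: "graph_connected G" and u: "u \<in> fst G" and z: "z \<in> fst G" and d: "gdist G u z = 1"
  shows "snd G u z"
proof -
  obtain n where "(snd G ^^ n) u z"
    using conn u z rtranclp_imp_relpowp by (fastforce simp: graph_connected_def)
  then have "(snd G ^^ gdist G u z) u z" unfolding gdist_def by (rule LeastI)
  then show ?thesis using d by (simp only: relpowp_1)
qed

lemma Dset_1_eq_nbhd:
  assumes "simple_graph G" "graph_connected G" "u \<in> fst G"
  shows "Dset G 1 u = nbhd G u"
  using gdist_eq_1[OF assms(1)] adjacent_if_gdist_eq_1[OF assms(2,3)]
  unfolding Dset_def nbhd_def by auto

lemma gdist_eq_2:
  assumes "u \<noteq> z" "\<not> snd G u z" "snd G u w" "snd G w z"
  shows "gdist G u z = 2"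
  unfolding gdist_def
proof (rule Least_equality)
  show "(snd G ^^ 2) u z" using assms(3,4) by (auto simp: numeral_2_eq_2 intro: relpowp_Suc_I2)
  show "2 \<le> n" if "(snd G ^^ n) u z" for n
    using that assms(1,2) by (cases n; cases "n - 1") auto
qed

lemma not_distance_regular_if_c2_differs:
  assumes G: "simple_graph G" and V: "u \<in> fst G" "v \<in> fst G" "x \<in> fst G"
    and d: "gdist G u v = 2" "gdist G u x = 2"
    and c2: "card (nbhd G v \<inter> nbhd G u) \<noteq> card (nbhd G x \<inter> nbhd G u)"
  shows "\<not> distance_regular G"
proof
  assume dr: "distance_regular G"
  then have "Dprev G 2 u = nbhd G u"
    using Dset_1_eq_nbhd[OF G _ V(1)] by (simp add: distance_regular_def Dprev_def)
  moreover have "\<forall>w\<in>fst G. \<forall>y\<in>fst G. gdist G u v = gdist G w y \<longrightarrow>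
      card (nbhd G v \<inter> Dprev G (gdist G u v) u) = card (nbhd G y \<inter> Dprev G (gdist G u v) w)"
    using dr V(1,2) unfolding distance_regular_def Let_def by blast
  then have "card (nbhd G v \<inter> Dprev G 2 u) = card (nbhd G x \<inter> Dprev G 2 u)"
    using V(1,3) d by simp
  ultimately show False using c2 by simp
qed

section \<open>The Cartesian product of a cycle and a complete graph\<close>

definition cycle_adj :: "nat \<Rightarrow> nat \<Rightarrow> nat \<Rightarrow> bool" where
  "cycle_adj N a b \<longleftrightarrow> b = Suc a mod N \<or> a = Suc b mod N"

definition cycle_pred :: "nat \<Rightarrow> nat \<Rightarrow> nat" where
  "cycle_pred N a = (if a = 0 then N - 1 else a - 1)"

text \<open>The Cartesian product of the cycle C_N and the complete graph K_q: the vertex (a, l)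
  with a < N, l < q is encoded as a + N * l, so a is the position on the cycle and l the layer.\<close>
definition cycle_clique_adj :: "nat \<Rightarrow> nat \<Rightarrow> nat \<Rightarrow> nat \<Rightarrow> bool" where
  "cycle_clique_adj N q v w \<longleftrightarrow> v < N * q \<and> w < N * q \<and>
     ((v div N = w div N \<and> cycle_adj N (v mod N) (w mod N)) \<or>
      (v mod N = w mod N \<and> v div N \<noteq> w div N))"

definition cycle_clique :: "nat \<Rightarrow> nat \<Rightarrow> graph" where
  "cycle_clique N q = ({..<N * q}, cycle_clique_adj N q)"

lemma encode_less_mult: "a < N \<Longrightarrow> l < q \<Longrightarrow> a + N * l < N * (q::nat)"
proof -
  assume "a < N" "l < q"
  then have "a + N * l < N * Suc l" by simp
  also have "\<dots> \<le> N * q" using \<open>l < q\<close> by (intro mult_le_mono2) simp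
  finally show ?thesis .
qed

lemma encode_eq_iff:
  assumes "a < N" "b < N"
  shows "a + N * l = b + N * l' \<longleftrightarrow> a = b \<and> l = (l'::nat)"
proof
  assume e: "a + N * l = b + N * l'"
  show "a = b \<and> l = l'"
    using arg_cong[OF e, of "\<lambda>v. v mod N"] arg_cong[OF e, of "\<lambda>v. v div N"] assms by simp
qed simp

lemma less_mult_iff_div_less: "0 < N \<Longrightarrow> v < N * q \<longleftrightarrow> v div N < (q::nat)"
  by (simp add: div_less_iff_less_mult mult.commute)

lemma Suc_mod_eq_if: "a < N \<Longrightarrow> Suc a mod N = (if Suc a = N then 0 else Suc a)"
  by (simp add: Suc_lessI)

lemma cycle_pred_less: "a < N \<Longrightarrow> cycle_pred N a < N"
  unfolding cycle_pred_def by auto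

lemma cycle_adj_iff:
  "a < N \<Longrightarrow> b < N \<Longrightarrow> cycle_adj N a b \<longleftrightarrow> b = Suc a mod N \<or> b = cycle_pred N a"
  unfolding cycle_adj_def cycle_pred_def by (auto simp: Suc_mod_eq_if)

lemma cycle_neighbours_distinct:
  assumes "3 \<le> N" "a < N"
  shows "Suc a mod N \<noteq> a" "cycle_pred N a \<noteq> a" "Suc a mod N \<noteq> cycle_pred N a"
  using assms unfolding cycle_pred_def by (auto simp: Suc_mod_eq_if)

lemma cycle_adj_iff_cases: "2 \<le> N \<Longrightarrow> a < N \<Longrightarrow> b < N \<Longrightarrow>
   cycle_adj N a b \<longleftrightarrow> b = a + 1 \<or> a = b + 1 \<or> (a = N - 1 \<and> b = 0) \<or> (b = N - 1 \<and> a = 0)"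
  unfolding cycle_adj_def by (auto simp: Suc_mod_eq_if)

lemma cycle_clique_adj_encode:
  assumes "a < N" "b < N" "l < q" "l' < q"
  shows "cycle_clique_adj N q (a + N * l) (b + N * l') \<longleftrightarrow>
    (l = l' \<and> cycle_adj N a b) \<or> (a = b \<and> l \<noteq> l')"
  using assms by (simp add: cycle_clique_adj_def encode_less_mult)

lemma simple_graph_cycle_clique:
  assumes "2 \<le> N" "0 < q"
  shows "simple_graph (cycle_clique N q)"
proof -
  have "\<not> cycle_adj N a a" if "a < N" for a
    using that assms by (auto simp: cycle_adj_def Suc_mod_eq_if)
  then show ?thesis
    unfolding simple_graph_def cycle_clique_def cycle_clique_adj_def
    using assms by (auto simp: cycle_adj_def lessThan_empty_iff)
qed

lemma cycle_clique_vertexE: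
  assumes "v \<in> fst (cycle_clique N q)"
  obtains c l where "c < N" "l < q" "v = c + N * l"
proof
  have "0 < N" using assms by (cases N) (auto simp: cycle_clique_def)
  then show "v mod N < N" "v div N < q" "v = v mod N + N * (v div N)"
    using assms less_mult_iff_div_less by (auto simp: cycle_clique_def)
qed

lemma mem_nbhd_cycle_clique_encode:
  assumes c: "c < N" and b: "b < N" and l: "l < q"
  shows "b + N * l' \<in> nbhd (cycle_clique N q) (c + N * l) \<longleftrightarrow>
    l' < q \<and> ((l = l' \<and> cycle_adj N c b) \<or> (c = b \<and> l \<noteq> l'))"
proof -
  have "b + N * l' \<in> nbhd (cycle_clique N q) (c + N * l) \<longleftrightarrow>
      l' < q \<and> cycle_clique_adj N q (c + N * l) (b + N * l')"
    using less_mult_iff_div_less[of N "b + N * l'" q] b by (auto simp: nbhd_def cycle_clique_def)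
  then show ?thesis using cycle_clique_adj_encode[OF c b l] by blast
qed

lemma nbhd_cycle_clique_encode:
  assumes N: "3 \<le> N" and c: "c < N" and l: "l < q"
  shows "nbhd (cycle_clique N q) (c + N * l) =
    {Suc c mod N + N * l, cycle_pred N c + N * l} \<union> (\<lambda>l'. c + N * l') ` ({..<q} - {l})"
    (is "_ = ?S")
proof (rule set_eqI)
  fix w
  define b l' where "b = w mod N" and "l' = w div N"
  have N0: "0 < N" using N by simp
  have b: "b < N" and w: "w = b + N * l'" using N0 by (simp_all add: b_def l'_def)
  have "w \<in> nbhd (cycle_clique N q) (c + N * l) \<longleftrightarrow>
      l' < q \<and> ((l = l' \<and> cycle_adj N c b) \<or> (c = b \<and> l \<noteq> l'))"
    using mem_nbhd_cycle_clique_encode[OF c b l] w by simp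
  also have "\<dots> \<longleftrightarrow> l' < q \<and> ((l = l' \<and> (b = Suc c mod N \<or> b = cycle_pred N c)) \<or> (c = b \<and> l \<noteq> l'))"
    using cycle_adj_iff[OF c b] by simp
  also have "\<dots> \<longleftrightarrow> w \<in> ?S"
    using encode_eq_iff[OF b] cycle_pred_less[OF c] N0 c l by (auto simp: w)
  finally show "w \<in> nbhd (cycle_clique N q) (c + N * l) \<longleftrightarrow> w \<in> ?S" .
qed

lemma k_regular_cycle_clique:
  assumes N: "3 \<le> N" and q: "0 < q"
  shows "k_regular (Suc q) (cycle_clique N q)"
  unfolding k_regular_def
proof
  fix v assume "v \<in> fst (cycle_clique N q)"
  have N0: "0 < N" using N by simp
  obtain c l where c: "c < N" and l: "l < q" and v: "v = c + N * l"
    using cycle_clique_vertexE[OF \<open>v \<in> _\<close>] .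
  define A where "A = {Suc c mod N + N * l, cycle_pred N c + N * l}"
  define B where "B = (\<lambda>l'. c + N * l') ` ({..<q} - {l})"
  have "card A = 2"
    using cycle_neighbours_distinct[OF N c] by (simp add: A_def)
  moreover have "card B = q - 1"
    using N0 l by (simp add: B_def card_image inj_on_def)
  moreover have "A \<inter> B = {}"
    using cycle_neighbours_distinct[OF N c] encode_eq_iff[OF _ c] cycle_pred_less[OF c] N0
    by (auto simp: A_def B_def)
  moreover have "finite A" "finite B" by (simp_all add: A_def B_def)
  ultimately have "card (A \<union> B) = Suc q"
    using q card_Un_disjoint[of A B] by simp
  then show "card (nbhd (cycle_clique N q) v) = Suc q"
    unfolding v nbhd_cycle_clique_encode[OF N c l] A_def B_def .
qed

lemma cycle_clique_walk_in_layer: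
  assumes c: "c < N" and l: "l < q"
  shows "(cycle_clique_adj N q)\<^sup>*\<^sup>* (c + N * l) ((c + j) mod N + N * l)"
proof (induction j)
  case 0
  then show ?case using c by simp
next
  case (Suc j)
  have "cycle_clique_adj N q ((c + j) mod N + N * l) (Suc ((c + j) mod N) mod N + N * l)"
    using c l by (simp add: cycle_clique_adj_encode cycle_adj_def)
  then show ?case using Suc by (simp add: mod_Suc_eq)
qed

lemma graph_connected_cycle_clique: "graph_connected (cycle_clique N q)"
  unfolding graph_connected_def
proof (intro ballI)
  fix u v assume "u \<in> fst (cycle_clique N q)" "v \<in> fst (cycle_clique N q)"
  then obtain c l b l' where c: "c < N" "l < q" "u = c + N * l" and b: "b < N" "l' < q" "v = b + N * l'"
    using cycle_clique_vertexE by metis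
  have "(c + (b + N - c)) mod N = b" using b c by simp
  then have "(cycle_clique_adj N q)\<^sup>*\<^sup>* u (b + N * l)"
    using cycle_clique_walk_in_layer[OF c(1,2), of "b + N - c"] c by simp
  moreover have "l = l' \<or> cycle_clique_adj N q (b + N * l) v"
    using cycle_clique_adj_encode[OF b(1) b(1) c(2) b(2)] b by auto
  ultimately show "(snd (cycle_clique N q))\<^sup>*\<^sup>* u v"
    using b by (auto simp: cycle_clique_def)
qed

definition cycle_aut :: "nat \<Rightarrow> (nat \<Rightarrow> nat) \<Rightarrow> bool" where
  "cycle_aut N F \<longleftrightarrow> (\<forall>a<N. F a < N) \<and> inj_on F {..<N} \<and>
     (\<forall>a<N. \<forall>b<N. cycle_adj N (F a) (F b) \<longleftrightarrow> cycle_adj N a b)"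

lemma cycle_aut_id: "cycle_aut N id"
  by (simp add: cycle_aut_def)

lemma cycle_aut_rotate: "cycle_aut N (\<lambda>a. (a + c) mod N)"
proof -
  have cancel: "(a + c) mod N = (b + c) mod N \<longleftrightarrow> a mod N = b mod N" for a b
    using cong_add_rcancel_nat[of a c b N] by (simp add: cong_def)
  have "cycle_adj N ((a + c) mod N) ((b + c) mod N) \<longleftrightarrow> cycle_adj N a b"
    if "a < N" "b < N" for a b
  proof -
    have "Suc ((a + c) mod N) mod N = (Suc a + c) mod N" "Suc ((b + c) mod N) mod N = (Suc b + c) mod N"
      by (simp_all add: mod_Suc_eq)
    then show ?thesis
      using cancel[of b "Suc a"] cancel[of a "Suc b"] that by (simp add: cycle_adj_def)
  qed
  then show ?thesis by (auto simp: cycle_aut_def inj_on_def cancel)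
qed

lemma cycle_aut_reflect:
  assumes "2 \<le> N"
  shows "cycle_aut N (\<lambda>a. (N - a) mod N)"
proof -
  have reflect: "(N - a) mod N = (if a = 0 then 0 else N - a)" if "a < N" for a
    using that by auto
  show ?thesis
    unfolding cycle_aut_def using assms
    by (auto simp: reflect inj_on_def cycle_adj_iff_cases split: if_splits)
qed

lemma graph_aut_cycle_clique_product:
  assumes F: "cycle_aut N F" and L: "\<forall>l<q. L l < q" "inj_on L {..<q}"
  shows "graph_aut (cycle_clique N q) (\<lambda>v. F (v mod N) + N * L (v div N))"
proof -
  define h where "h v = F (v mod N) + N * L (v div N)" for v
  have F_less: "F a < N" if "a < N" for a using F that by (simp add: cycle_aut_def)
  have F_eq: "F a = F b \<longleftrightarrow> a = b" if "a < N" "b < N" for a b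
    using F that by (auto simp: cycle_aut_def inj_on_def)
  have L_eq: "L a = L b \<longleftrightarrow> a = b" if "a < q" "b < q" for a b
    using L that by (auto simp: inj_on_def)
  have h_encode: "h (c + N * l) = F c + N * L l" if "c < N" for c l
    using that by (simp add: h_def)
  have maps_to: "h v \<in> fst (cycle_clique N q)" if "v \<in> fst (cycle_clique N q)" for v
    using that F_less L by (elim cycle_clique_vertexE) (auto simp: cycle_clique_def h_encode encode_less_mult)
  have "inj_on h (fst (cycle_clique N q))"
  proof (rule inj_onI)
    fix v w assume "v \<in> fst (cycle_clique N q)" "w \<in> fst (cycle_clique N q)" "h v = h w"
    then show "v = w"
      using F_less F_eq L L_eq encode_eq_iff
      by (elim cycle_clique_vertexE) (auto simp: h_encode)
  qed
  then have "bij_betw h (fst (cycle_clique N q)) (fst (cycle_clique N q))"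
    using maps_to endo_inj_surj[of "fst (cycle_clique N q)" h] by (auto simp: bij_betw_def cycle_clique_def)
  moreover have "cycle_clique_adj N q v w \<longleftrightarrow> cycle_clique_adj N q (h v) (h w)"
    if "v \<in> fst (cycle_clique N q)" "w \<in> fst (cycle_clique N q)" for v w
    using that F_less F_eq L L_eq F
    by (elim cycle_clique_vertexE) (auto simp: h_encode cycle_clique_adj_encode cycle_aut_def)
  ultimately show ?thesis unfolding graph_aut_def h_def[symmetric] by (simp add: cycle_clique_def)
qed

definition cycle_dist :: "nat \<Rightarrow> nat \<Rightarrow> nat" where
  "cycle_dist N a = min a (N - a)"

lemma cycle_dist_reflect: "a < N \<Longrightarrow> cycle_dist N ((N - a) mod N) = cycle_dist N a"
  unfolding cycle_dist_def by (cases "a = 0") auto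

lemma cycle_dist_eq_imp:
  "a < N \<Longrightarrow> b < N \<Longrightarrow> cycle_dist N a = cycle_dist N b \<Longrightarrow> b = a \<or> b = (N - a) mod N"
  unfolding cycle_dist_def by (cases "a = 0") (auto split: if_splits)

text \<open>The orbits of the stabiliser of the vertex 0: for t \<le> N div 2, the cell 2 t + 1 consists of the
  vertices of layer 0 at cyclic distance t from position 0, and the cell 2 t + 2 of those in the other
  layers.\<close>
definition cycle_clique_cell :: "nat \<Rightarrow> nat \<Rightarrow> nat \<Rightarrow> nat set" where
  "cycle_clique_cell N q i = {v \<in> {..<N * q}.
     cycle_dist N (v mod N) = (i - 1) div 2 \<and> (v div N = 0 \<longleftrightarrow> even (i - 1))}"

lemma cycle_clique_cell_1:
  assumes "0 < N" "0 < q"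
  shows "cycle_clique_cell N q 1 = {0}"
proof
  show "{0} \<subseteq> cycle_clique_cell N q 1"
    using assms by (simp add: cycle_clique_cell_def cycle_dist_def)
  show "cycle_clique_cell N q 1 \<subseteq> {0}"
  proof
    fix v assume "v \<in> cycle_clique_cell N q 1"
    then have "cycle_dist N (v mod N) = 0" "v div N = 0" by (simp_all add: cycle_clique_cell_def)
    moreover have "v mod N < N" using assms by simp
    ultimately have "v mod N = 0" "v div N = 0" by (simp_all add: cycle_dist_def)
    then show "v \<in> {0}" by (metis div_mult_mod_eq mult_0 add_0 singletonI)
  qed
qed

lemma cycle_clique_cell_nonempty:
  assumes "3 \<le> N" "2 \<le> q" "1 \<le> i" "i \<le> 2 * (N div 2) + 2"
  shows "cycle_clique_cell N q i \<noteq> {}"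
proof -
  define t where "t = (i - 1) div 2"
  have "t \<le> N div 2" using assms(4) unfolding t_def by linarith
  then have t: "t < N" "cycle_dist N t = t" using assms(1) unfolding cycle_dist_def by linarith+
  define l :: nat where "l = (if even (i - 1) then 0 else 1)"
  have "t + N * l \<in> cycle_clique_cell N q i"
    using t assms encode_less_mult[OF t(1), of l q] by (simp add: cycle_clique_cell_def t_def l_def)
  then show ?thesis by blast
qed

lemma cycle_clique_cells_disjoint:
  assumes "1 \<le> i" "1 \<le> j" "i \<noteq> j"
  shows "cycle_clique_cell N q i \<inter> cycle_clique_cell N q j = {}"
proof -
  have "i - 1 \<noteq> j - 1" using assms by simp
  then have "(i - 1) div 2 \<noteq> (j - 1) div 2 \<or> (even (i - 1) \<noteq> even (j - 1))" by presburger
  then show ?thesis by (auto simp: cycle_clique_cell_def)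
qed

lemma cycle_clique_cells_cover:
  assumes "0 < N"
  shows "(\<Union>i\<in>{1..2 * (N div 2) + 2}. cycle_clique_cell N q i) = fst (cycle_clique N q)"
proof
  show "(\<Union>i\<in>{1..2 * (N div 2) + 2}. cycle_clique_cell N q i) \<subseteq> fst (cycle_clique N q)"
    by (auto simp: cycle_clique_cell_def cycle_clique_def)
  show "fst (cycle_clique N q) \<subseteq> (\<Union>i\<in>{1..2 * (N div 2) + 2}. cycle_clique_cell N q i)"
  proof
    fix v assume v: "v \<in> fst (cycle_clique N q)"
    define i where "i = 2 * cycle_dist N (v mod N) + (if v div N = 0 then 1 else 2)"
    have "i \<in> {1..2 * (N div 2) + 2}" unfolding i_def cycle_dist_def by auto
    moreover have "v \<in> cycle_clique_cell N q i"
      using v by (simp add: i_def cycle_clique_cell_def cycle_clique_def)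
    ultimately show "v \<in> (\<Union>i\<in>{1..2 * (N div 2) + 2}. cycle_clique_cell N q i)" by blast
  qed
qed

lemma cycle_clique_product_mem_cell_iff:
  assumes "c < N" "l < q" "F c < N" "cycle_dist N (F c) = cycle_dist N c" "L l < q" "L l = 0 \<longleftrightarrow> l = 0"
  shows "F c + N * L l \<in> cycle_clique_cell N q i \<longleftrightarrow> c + N * l \<in> cycle_clique_cell N q i"
  using assms by (simp add: cycle_clique_cell_def encode_less_mult)

lemma cycle_clique_cell_transitive:
  assumes N: "3 \<le> N" and y: "y \<in> cycle_clique_cell N q j" and y': "y' \<in> cycle_clique_cell N q j"
  shows "\<exists>h. graph_aut (cycle_clique N q) h \<and>
    (\<forall>i. \<forall>v\<in>fst (cycle_clique N q). h v \<in> cycle_clique_cell N q i \<longleftrightarrow> v \<in> cycle_clique_cell N q i) \<and>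
    h y = y'"
proof -
  have "y \<in> fst (cycle_clique N q)" "y' \<in> fst (cycle_clique N q)"
    using y y' by (auto simp: cycle_clique_cell_def cycle_clique_def)
  then obtain c l c' l' where c: "c < N" "l < q" "y = c + N * l" and c': "c' < N" "l' < q" "y' = c' + N * l'"
    by (metis cycle_clique_vertexE)
  have dist: "cycle_dist N c = cycle_dist N c'" and layer0: "l = 0 \<longleftrightarrow> l' = 0"
    using y y' c c' by (simp_all add: cycle_clique_cell_def)
  define F where "F = (if c' = c then id else (\<lambda>a. (N - a) mod N))"
  define L where "L = id(l := l', l' := l)"
  have F: "cycle_aut N F" using cycle_aut_id cycle_aut_reflect N by (simp add: F_def)
  have F_dist: "cycle_dist N (F a) = cycle_dist N a" if "a < N" for a
    using cycle_dist_reflect[OF that] by (simp add: F_def)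
  have F_c: "F c = c'" using cycle_dist_eq_imp[OF c(1) c'(1) dist] by (auto simp: F_def)
  have L: "\<forall>x<q. L x < q" "inj_on L {..<q}" "\<forall>x. L x = 0 \<longleftrightarrow> x = 0"
    using c(2) c'(2) layer0 by (auto simp: L_def inj_on_def)
  let ?h = "\<lambda>v. F (v mod N) + N * L (v div N)"
  have "?h v \<in> cycle_clique_cell N q i \<longleftrightarrow> v \<in> cycle_clique_cell N q i"
    if "v \<in> fst (cycle_clique N q)" for i v
    using that F L F_dist cycle_clique_product_mem_cell_iff
    by (elim cycle_clique_vertexE) (simp add: cycle_aut_def)
  moreover have "?h y = y'" using c c' F_c by (simp add: L_def)
  ultimately show ?thesis using graph_aut_cycle_clique_product[OF F L(1,2)] by blast
qed

lemma cycle_clique_vertex_transitive: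
  assumes u: "u \<in> fst (cycle_clique N q)"
  shows "\<exists>\<sigma>. graph_aut (cycle_clique N q) \<sigma> \<and> \<sigma> 0 = u"
proof -
  obtain c l where c: "c < N" "l < q" "u = c + N * l" using cycle_clique_vertexE[OF u] .
  have L: "\<forall>x<q. (id(0 := l, l := 0)) x < q" "inj_on (id(0 := l, l := 0)) {..<q}"
    using c by (auto simp: inj_on_def)
  show ?thesis
    using graph_aut_cycle_clique_product[OF cycle_aut_rotate[of N c] L] c by auto
qed

lemma highly_regular_cycle_clique:
  assumes N: "3 \<le> N" and q: "2 \<le> q"
  shows "highly_regular (cycle_clique N q)"
proof (rule highly_regular_if_cellwise_transitive)
  have N0: "0 < N" using N by simp
  show "2 \<le> 2 * (N div 2) + 2" by simp
  have "N + N \<le> N * q" using mult_le_mono2[OF q, of N] by (simp only: mult_2_right)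
  then show "2 * (N div 2) + 2 < card (fst (cycle_clique N q))"
    using N by (simp add: cycle_clique_def)
  show "0 \<in> fst (cycle_clique N q)" "cycle_clique_cell N q 1 = {0}"
    using N0 q cycle_clique_cell_1 by (simp_all add: cycle_clique_def)
  show "\<forall>i\<in>{1..2 * (N div 2) + 2}. cycle_clique_cell N q i \<noteq> {}"
    using cycle_clique_cell_nonempty N q by simp
  show "\<forall>i\<in>{1..2 * (N div 2) + 2}. \<forall>j\<in>{1..2 * (N div 2) + 2}.
      i \<noteq> j \<longrightarrow> cycle_clique_cell N q i \<inter> cycle_clique_cell N q j = {}"
    using cycle_clique_cells_disjoint by simp
  show "(\<Union>i\<in>{1..2 * (N div 2) + 2}. cycle_clique_cell N q i) = fst (cycle_clique N q)"
    using cycle_clique_cells_cover N0 .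
  show "\<forall>j\<in>{1..2 * (N div 2) + 2}. \<forall>y\<in>cycle_clique_cell N q j. \<forall>y'\<in>cycle_clique_cell N q j.
      \<exists>h. graph_aut (cycle_clique N q) h \<and>
      (\<forall>i\<in>{1..2 * (N div 2) + 2}. \<forall>v\<in>fst (cycle_clique N q).
         h v \<in> cycle_clique_cell N q i \<longleftrightarrow> v \<in> cycle_clique_cell N q i) \<and> h y = y'"
    using cycle_clique_cell_transitive[OF N] by blast
  show "\<forall>u\<in>fst (cycle_clique N q). \<exists>\<sigma>. graph_aut (cycle_clique N q) \<sigma> \<and> \<sigma> 0 = u"
    using cycle_clique_vertex_transitive by blast
qed

lemma cycle_clique_common_nbhds:
  assumes N: "5 \<le> N" and q: "2 \<le> q"
  shows "nbhd (cycle_clique N q) (2 + N * 0) \<inter> nbhd (cycle_clique N q) (0 + N * 0) = {1 + N * 0}"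
    and "nbhd (cycle_clique N q) (1 + N * 1) \<inter> nbhd (cycle_clique N q) (0 + N * 0) =
      {1 + N * 0, 0 + N * 1}"
proof -
  let ?G = "cycle_clique N q"
  have mem_nbhd: "b + N * l' \<in> nbhd ?G (c + N * l) \<longleftrightarrow>
      l' < q \<and> ((l = l' \<and> cycle_adj N c b) \<or> (c = b \<and> l \<noteq> l'))"
    if "c < N" "b < N" "l < q" for b c l l'
    using mem_nbhd_cycle_clique_encode[OF that] .
  have encode: "\<exists>b l'. b < N \<and> l' < q \<and> w = b + N * l'" if "w \<in> nbhd ?G v" for v w
  proof -
    have "w \<in> fst ?G" using that by (simp add: nbhd_def)
    then show ?thesis by (blast elim: cycle_clique_vertexE)
  qed
  show "nbhd ?G (2 + N * 0) \<inter> nbhd ?G (0 + N * 0) = {1 + N * 0}"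
  proof (intro set_eqI iffI)
    fix w assume w: "w \<in> nbhd ?G (2 + N * 0) \<inter> nbhd ?G (0 + N * 0)"
    then obtain b l' where "b < N" "l' < q" "w = b + N * l'" using encode by blast
    then show "w \<in> {1 + N * 0}"
      using w mem_nbhd[of 2 b 0 l'] mem_nbhd[of 0 b 0 l'] N q by (auto simp: cycle_adj_iff_cases)
  qed (use mem_nbhd[of 2 1 0 0] mem_nbhd[of 0 1 0 0] N q in \<open>auto simp: cycle_adj_iff_cases\<close>)
  show "nbhd ?G (1 + N * 1) \<inter> nbhd ?G (0 + N * 0) = {1 + N * 0, 0 + N * 1}"
  proof (intro set_eqI iffI)
    fix w assume w: "w \<in> nbhd ?G (1 + N * 1) \<inter> nbhd ?G (0 + N * 0)"
    then obtain b l' where "b < N" "l' < q" "w = b + N * l'" using encode by blast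
    then show "w \<in> {1 + N * 0, 0 + N * 1}"
      using w mem_nbhd[of 1 b 1 l'] mem_nbhd[of 0 b 0 l'] N q by (auto simp: cycle_adj_iff_cases)
  qed (use mem_nbhd[of 1 1 1 0] mem_nbhd[of 0 1 0 0] mem_nbhd[of 1 0 1 1] mem_nbhd[of 0 0 0 1] N q
       in \<open>auto simp: cycle_adj_iff_cases\<close>)
qed


lemma not_distance_regular_cycle_clique:
  assumes N: "5 \<le> N" and q: "2 \<le> q"
  shows "\<not> distance_regular (cycle_clique N q)"
proof (rule not_distance_regular_if_c2_differs)
  let ?G = "cycle_clique N q"
  have adj: "cycle_clique_adj N q (c + N * l) (b + N * l') \<longleftrightarrow>
      (l = l' \<and> cycle_adj N c b) \<or> (c = b \<and> l \<noteq> l')"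
    if "c < N" "b < N" "l < q" "l' < q" for b c l l'
    using cycle_clique_adj_encode[OF that] .
  show "simple_graph ?G" using simple_graph_cycle_clique N q by simp
  show "0 + N * 0 \<in> fst ?G" "2 + N * 0 \<in> fst ?G" "1 + N * 1 \<in> fst ?G"
    using N q encode_less_mult[of 0 N 0 q] encode_less_mult[of 2 N 0 q] encode_less_mult[of 1 N 1 q]
    by (simp_all add: cycle_clique_def)
  show "gdist ?G (0 + N * 0) (2 + N * 0) = 2"
    by (rule gdist_eq_2[where w = "1 + N * 0"])
      (use adj[of 0 2 0 0] adj[of 0 1 0 0] adj[of 1 2 0 0] N q
        in \<open>auto simp: cycle_clique_def cycle_adj_iff_cases\<close>)
  show "gdist ?G (0 + N * 0) (1 + N * 1) = 2"
    by (rule gdist_eq_2[where w = "1 + N * 0"])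
      (use adj[of 0 1 0 1] adj[of 0 1 0 0] adj[of 1 1 0 1] N q
        in \<open>auto simp: cycle_clique_def cycle_adj_iff_cases\<close>)
  show "card (nbhd ?G (2 + N * 0) \<inter> nbhd ?G (0 + N * 0)) \<noteq>
      card (nbhd ?G (1 + N * 1) \<inter> nbhd ?G (0 + N * 0))"
    unfolding cycle_clique_common_nbhds[OF N q] using N by simp
qed

theorem theoremA4:
  fixes k :: nat
  assumes "k \<ge> 3"
  shows "\<exists>S :: graph set. infinite S \<and>
    (\<forall>G \<in> S. simple_graph G \<and> graph_connected G \<and> k_regular k G \<and>
              highly_regular G \<and> \<not> distance_regular G) \<and>
    (\<forall>G \<in> S. \<forall>H \<in> S. G \<noteq> H \<longrightarrow> \<not> graph_iso G H)"
proof -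
  define q where "q = k - 1"
  have q: "2 \<le> q" and k: "k = Suc q" using assms by (auto simp: q_def)
  define S where "S = (\<lambda>N. cycle_clique N q) ` {5..}"
  have order: "card (fst (cycle_clique N q)) = N * q" for N by (simp add: cycle_clique_def)
  have "inj_on (\<lambda>N. cycle_clique N q) {5..}"
    using order q by (intro inj_onI) (metis mult_cancel2 not_numeral_le_zero)
  then have "infinite S" unfolding S_def using finite_imageD infinite_Ici by blast
  moreover have "simple_graph G \<and> graph_connected G \<and> k_regular k G \<and>
      highly_regular G \<and> \<not> distance_regular G" if "G \<in> S" for G
    using that q simple_graph_cycle_clique graph_connected_cycle_clique k_regular_cycle_clique
      highly_regular_cycle_clique not_distance_regular_cycle_clique
    by (auto simp: S_def k)
  moreover have "\<not> graph_iso G H" if "G \<in> S" "H \<in> S" "G \<noteq> H" for G H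
  proof
    assume "graph_iso G H"
    then have "card (fst G) = card (fst H)" by (rule graph_iso_card_eq)
    then show False using that order q by (auto simp: S_def)
  qed
  ultimately show ?thesis by blast
qed

end
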